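(* Let $L^2_0(B)$ denote the vector space $B$ with inner product $\langle b,b'\rangle=\Phi_A(b^*b')$. Then $L^2_0(B)\in{}_B\mathrm{Rep}^A$, with $B$ acting by left multiplication and the right $A$-comodule structure $\alpha_B=\Delta_A|_B$.
   Context: $A$ is a CQG Hopf $*$-algebra: a complex Hopf algebra $(A,\Delta_A,\varepsilon_A,S_A)$ with an anti-linear involution making it a $*$-algebra with $\Delta_A$ a $*$-homomorphism, admitting a state $\Phi_A$ with $(\Phi_A\otimes\mathrm{id})\Delta_A(a)=\Phi_A(a)1=(\mathrm{id}\otimes\Phi_A)\Delta_A(a)$ (it is faithful). Put $a^\dagger=S_A(a)^*$. $B\subseteq A$ is a unital right coideal $*$-subalgebra, i.e. $\Delta_A(B)\subseteq B\odot A$. ${}_B\mathrm{Rep}^A$: left $B$-modules $V$ with right $A$-comodule structure $v\mapsto v_{(0)}\otimes v_{(1)}$ satisfying $(bv)_{(0)}\otimes(bv)_{(1)}=b_{(1)}v_{(0)}\otimes b_{(2)}v_{(1)}$, which are pre-Hilbert spaces with $\langle v,bw\rangle=\langle b^*v,w\rangle$ and $\langle v,w_{(0)}\rangle w_{(1)}=\langle v_{(0)},w\rangle v_{(1)}^\dagger$ for all $v,w\in V$, $b\in B$. *)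

theory Defs
  imports Complex_Main
begin

text \<open>Algebraic tensors are represented by finite lists of elementary tensors
  (pairs of legs).  Two representatives define the same element of the algebraic
  tensor product iff they agree on all products of linear functionals (algebraic
  duals separate points of V \<otimes> W).\<close>

definition lin_fun :: "(complex \<Rightarrow> 'v \<Rightarrow> 'v) \<Rightarrow> ('v::ab_group_add \<Rightarrow> complex) \<Rightarrow> bool" where
  "lin_fun sc f \<longleftrightarrow> (\<forall>x y. f (x + y) = f x + f y) \<and> (\<forall>c x. f (sc c x) = c * f x)"

definition tensor_eq ::
  "(complex \<Rightarrow> 'v \<Rightarrow> 'v) \<Rightarrow> (complex \<Rightarrow> 'w \<Rightarrow> 'w) \<Rightarrow>
   ('v::ab_group_add \<times> 'w::ab_group_add) list \<Rightarrow> ('v \<times> 'w) list \<Rightarrow> bool" where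
  "tensor_eq scV scW xs ys \<longleftrightarrow>
     (\<forall>f g. lin_fun scV f \<longrightarrow> lin_fun scW g \<longrightarrow>
        (\<Sum>(x,y)\<leftarrow>xs. f x * g y) = (\<Sum>(x,y)\<leftarrow>ys. f x * g y))"

definition cqg_hopf_star_algebra ::
  "(complex \<Rightarrow> 'a \<Rightarrow> 'a) \<Rightarrow> ('a \<Rightarrow> 'a) \<Rightarrow> ('a \<Rightarrow> ('a \<times> 'a) list) \<Rightarrow>
   ('a \<Rightarrow> complex) \<Rightarrow> ('a \<Rightarrow> 'a) \<Rightarrow> ('a::ring_1 \<Rightarrow> complex) \<Rightarrow> bool" where
  "cqg_hopf_star_algebra sc st Delta eps S Phi \<longleftrightarrow>
     \<comment> \<open>complex algebra\<close>
     vector_space sc \<and>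
     (\<forall>c x y. sc c (x * y) = sc c x * y \<and> sc c (x * y) = x * sc c y) \<and>
     \<comment> \<open>coproduct: linear, unital, multiplicative, coassociative\<close>
     (\<forall>x y. tensor_eq sc sc (Delta (x + y)) (Delta x @ Delta y)) \<and>
     (\<forall>c x. tensor_eq sc sc (Delta (sc c x)) (map (\<lambda>(p,q). (sc c p, q)) (Delta x))) \<and>
     tensor_eq sc sc (Delta 1) [(1,1)] \<and>
     (\<forall>x y. tensor_eq sc sc (Delta (x * y))
              [(p * p', q * q'). (p,q) \<leftarrow> Delta x, (p',q') \<leftarrow> Delta y]) \<and>
     (\<forall>x f g h. lin_fun sc f \<longrightarrow> lin_fun sc g \<longrightarrow> lin_fun sc h \<longrightarrow>
        (\<Sum>(p,q)\<leftarrow>Delta x. \<Sum>(p',q')\<leftarrow>Delta p. f p' * g q' * h q) =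
        (\<Sum>(p,q)\<leftarrow>Delta x. \<Sum>(p',q')\<leftarrow>Delta q. f p * g p' * h q')) \<and>
     \<comment> \<open>counit: unital algebra homomorphism satisfying the counit law\<close>
     lin_fun sc eps \<and> eps 1 = 1 \<and> (\<forall>x y. eps (x * y) = eps x * eps y) \<and>
     (\<forall>x. (\<Sum>(p,q)\<leftarrow>Delta x. sc (eps p) q) = x) \<and>
     (\<forall>x. (\<Sum>(p,q)\<leftarrow>Delta x. sc (eps q) p) = x) \<and>
     \<comment> \<open>antipode\<close>
     (\<forall>x y. S (x + y) = S x + S y) \<and> (\<forall>c x. S (sc c x) = sc c (S x)) \<and>
     (\<forall>x. (\<Sum>(p,q)\<leftarrow>Delta x. S p * q) = sc (eps x) 1) \<and>
     (\<forall>x. (\<Sum>(p,q)\<leftarrow>Delta x. p * S q) = sc (eps x) 1) \<and>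
     \<comment> \<open>anti-linear involution making it a *-algebra, Delta a *-homomorphism\<close>
     (\<forall>x y. st (x + y) = st x + st y) \<and> (\<forall>c x. st (sc c x) = sc (cnj c) (st x)) \<and>
     (\<forall>x y. st (x * y) = st y * st x) \<and> (\<forall>x. st (st x) = x) \<and>
     (\<forall>x. tensor_eq sc sc (Delta (st x)) (map (\<lambda>(p,q). (st p, st q)) (Delta x))) \<and>
     \<comment> \<open>state: linear, unital, positive, faithful, left and right invariant\<close>
     lin_fun sc Phi \<and> Phi 1 = 1 \<and>
     (\<forall>x. Im (Phi (st x * x)) = 0 \<and> 0 \<le> Re (Phi (st x * x))) \<and>
     (\<forall>x. Phi (st x * x) = 0 \<longrightarrow> x = 0) \<and>
     (\<forall>x. (\<Sum>(p,q)\<leftarrow>Delta x. sc (Phi p) q) = sc (Phi x) 1) \<and>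
     (\<forall>x. (\<Sum>(p,q)\<leftarrow>Delta x. sc (Phi q) p) = sc (Phi x) 1)"

definition right_coideal_star_subalgebra ::
  "(complex \<Rightarrow> 'a \<Rightarrow> 'a) \<Rightarrow> ('a \<Rightarrow> 'a) \<Rightarrow> ('a \<Rightarrow> ('a \<times> 'a) list) \<Rightarrow> 'a::ring_1 set \<Rightarrow> bool" where
  "right_coideal_star_subalgebra sc st Delta B \<longleftrightarrow>
     1 \<in> B \<and> (\<forall>x\<in>B. \<forall>y\<in>B. x + y \<in> B \<and> x * y \<in> B) \<and>
     (\<forall>c. \<forall>x\<in>B. sc c x \<in> B) \<and> (\<forall>x\<in>B. st x \<in> B) \<and>
     (\<forall>b\<in>B. \<exists>xs. set (map fst xs) \<subseteq> B \<and> tensor_eq sc sc (Delta b) xs)"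

text \<open>V is a subspace (carrier set) of a complex vector space type 'v; the coaction is
  given by representatives in V \<otimes> A (first legs in V).\<close>

definition in_BRepA ::
  "(complex \<Rightarrow> 'a \<Rightarrow> 'a) \<Rightarrow> ('a \<Rightarrow> 'a) \<Rightarrow> ('a \<Rightarrow> ('a \<times> 'a) list) \<Rightarrow>
   ('a \<Rightarrow> complex) \<Rightarrow> ('a \<Rightarrow> 'a) \<Rightarrow> 'a::ring_1 set \<Rightarrow>
   'v set \<Rightarrow> (complex \<Rightarrow> 'v \<Rightarrow> 'v) \<Rightarrow> ('a \<Rightarrow> 'v \<Rightarrow> 'v) \<Rightarrow> ('v \<Rightarrow> ('v \<times> 'a) list) \<Rightarrow>
   ('v::ab_group_add \<Rightarrow> 'v \<Rightarrow> complex) \<Rightarrow> bool" where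
  "in_BRepA sc st Delta eps S B V scV act coact inner \<longleftrightarrow>
     \<comment> \<open>V is a complex vector space\<close>
     vector_space scV \<and> 0 \<in> V \<and> (\<forall>v\<in>V. \<forall>w\<in>V. v + w \<in> V) \<and> (\<forall>c. \<forall>v\<in>V. scV c v \<in> V) \<and>
     \<comment> \<open>left B-module\<close>
     (\<forall>b\<in>B. \<forall>v\<in>V. act b v \<in> V) \<and>
     (\<forall>b\<in>B. \<forall>b'\<in>B. \<forall>v\<in>V. act (b + b') v = act b v + act b' v) \<and>
     (\<forall>b\<in>B. \<forall>v\<in>V. \<forall>w\<in>V. act b (v + w) = act b v + act b w) \<and>
     (\<forall>c. \<forall>b\<in>B. \<forall>v\<in>V. act (sc c b) v = scV c (act b v) \<and> act b (scV c v) = scV c (act b v)) \<and>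
     (\<forall>b\<in>B. \<forall>b'\<in>B. \<forall>v\<in>V. act (b * b') v = act b (act b' v)) \<and>
     (\<forall>v\<in>V. act 1 v = v) \<and>
     \<comment> \<open>right A-comodule\<close>
     (\<forall>v\<in>V. set (map fst (coact v)) \<subseteq> V) \<and>
     (\<forall>v\<in>V. \<forall>w\<in>V. tensor_eq scV sc (coact (v + w)) (coact v @ coact w)) \<and>
     (\<forall>c. \<forall>v\<in>V. tensor_eq scV sc (coact (scV c v)) (map (\<lambda>(x,a). (scV c x, a)) (coact v))) \<and>
     (\<forall>v\<in>V. \<forall>f g h. lin_fun scV f \<longrightarrow> lin_fun sc g \<longrightarrow> lin_fun sc h \<longrightarrow>
        (\<Sum>(w,a)\<leftarrow>coact v. \<Sum>(w',a')\<leftarrow>coact w. f w' * g a' * h a) =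
        (\<Sum>(w,a)\<leftarrow>coact v. \<Sum>(p,q)\<leftarrow>Delta a. f w * g p * h q)) \<and>
     (\<forall>v\<in>V. (\<Sum>(w,a)\<leftarrow>coact v. scV (eps a) w) = v) \<and>
     \<comment> \<open>compatibility (bv)_(0) \<otimes> (bv)_(1) = b_(1) v_(0) \<otimes> b_(2) v_(1)\<close>
     (\<forall>b\<in>B. \<forall>v\<in>V. \<forall>xs. set (map fst xs) \<subseteq> B \<longrightarrow> tensor_eq sc sc xs (Delta b) \<longrightarrow>
        tensor_eq scV sc (coact (act b v))
          [(act p w, q * a). (p,q) \<leftarrow> xs, (w,a) \<leftarrow> coact v]) \<and>
     \<comment> \<open>pre-Hilbert space (inner product anti-linear in the first variable)\<close>
     (\<forall>u\<in>V. \<forall>v\<in>V. \<forall>w\<in>V. inner u (v + w) = inner u v + inner u w) \<and>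
     (\<forall>c. \<forall>u\<in>V. \<forall>v\<in>V. inner u (scV c v) = c * inner u v) \<and>
     (\<forall>u\<in>V. \<forall>v\<in>V. inner v u = cnj (inner u v)) \<and>
     (\<forall>v\<in>V. Im (inner v v) = 0 \<and> 0 \<le> Re (inner v v)) \<and>
     (\<forall>v\<in>V. inner v v = 0 \<longrightarrow> v = 0) \<and>
     \<comment> \<open>\<langle>v, b w\<rangle> = \<langle>b* v, w\<rangle>\<close>
     (\<forall>b\<in>B. \<forall>v\<in>V. \<forall>w\<in>V. inner v (act b w) = inner (act (st b) v) w) \<and>
     \<comment> \<open>\<langle>v, w_(0)\<rangle> w_(1) = \<langle>v_(0), w\<rangle> v_(1)^\<dagger>, with a^\<dagger> = S(a)^*\<close>
     (\<forall>v\<in>V. \<forall>w\<in>V. (\<Sum>(x,a)\<leftarrow>coact w. sc (inner v x) a) =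
                   (\<Sum>(x,a)\<leftarrow>coact v. sc (inner x w) (st (S a))))"

end

theory Submission
  imports Defs
begin

(* The inner product Phi(b* b') is hermitian by polarization and definite because Phi is
   faithful, and left multiplication by b* is adjoint to left multiplication by b.  Since B is
   a right coideal, Delta restricts to a coaction on B, and each comodule axiom, as well as the
   compatibility of action and coaction, is the corresponding identity for Delta itself.  The one
   substantial axiom, <v, w_(0)> w_(1) = <v_(0), w> v_(1)^dagger, is strong invariance of the Haar
   state applied to v*; strong invariance follows from invariance, coassociativity and the
   antipode and counit laws.

   Tensors are given by representatives that agree on products of functionals.  Expanding one
   leg in a basis shows that such representatives agree under every bilinear map, which is how
   all identities are transported between representatives. *)

lemma lin_fun_add: "lin_fun sc f \<Longrightarrow> f (x + y) = f x + f y"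
  by (simp add: lin_fun_def)

lemma lin_fun_scale: "lin_fun sc f \<Longrightarrow> f (sc c x) = c * f x"
  by (simp add: lin_fun_def)

lemma lin_fun_zero: "lin_fun sc f \<Longrightarrow> f 0 = 0"
  using lin_fun_add[of sc f 0 0] by simp

lemma lin_fun_diff: "lin_fun sc f \<Longrightarrow> f (x - y) = f x - f y"
  using lin_fun_add[of sc f "x - y" y] by simp

lemma lin_fun_sum: "lin_fun sc f \<Longrightarrow> f (sum g E) = (\<Sum>e\<in>E. f (g e))"
  by (induction E rule: infinite_finite_induct) (simp_all add: lin_fun_zero lin_fun_add)

lemma lin_fun_sum_list: "lin_fun sc f \<Longrightarrow> f (\<Sum>(p,q)\<leftarrow>xs. g p q) = (\<Sum>(p,q)\<leftarrow>xs. f (g p q))"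
  by (induction xs) (auto simp: lin_fun_zero lin_fun_add)

lemma cnj_sum_list: "cnj (\<Sum>(p,q)\<leftarrow>xs. g p q) = (\<Sum>(p,q)\<leftarrow>xs. cnj (g p q))"
  by (induction xs) auto

lemma sum_list_pairs_cong:
  "(\<And>p q. (p,q) \<in> set xs \<Longrightarrow> f p q = g p q) \<Longrightarrow> (\<Sum>(p,q)\<leftarrow>xs. f p q) = (\<Sum>(p,q)\<leftarrow>xs. g p q)"
  by (induction xs) auto

lemma sum_list_pairs_map:
  "(\<Sum>(p,q)\<leftarrow>map (\<lambda>(p,q). (F p, G q)) xs. M p q) = (\<Sum>(p,q)\<leftarrow>xs. M (F p) (G q))"
  by (induction xs) auto

lemma sum_list_pairs_concat:
  "(\<Sum>(a,b)\<leftarrow>concat (map (\<lambda>(p,q). map (\<lambda>(p',q'). (F p q p' q', H p q p' q')) (ys p q)) xs). G a b) =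
   (\<Sum>(p,q)\<leftarrow>xs. \<Sum>(p',q')\<leftarrow>ys p q. G (F p q p' q') (H p q p' q') :: 'c::comm_monoid_add)"
  by (induction xs) (auto simp: case_prod_unfold o_def)

lemma sum_list_pairs_swap:
  "(\<Sum>(p,q)\<leftarrow>xs. \<Sum>(p',q')\<leftarrow>ys. G p q p' q') =
   (\<Sum>(p',q')\<leftarrow>ys. \<Sum>(p,q)\<leftarrow>xs. G p q p' q' :: 'c::comm_monoid_add)"
  by (induction xs) (auto simp: case_prod_unfold sum_list_addf)

lemma sum_list_pairs_sum_swap:
  "(\<Sum>(p,q)\<leftarrow>xs. \<Sum>e\<in>E. G p q e) = (\<Sum>e\<in>E. \<Sum>(p,q)\<leftarrow>xs. G p q e)"
  by (induction xs) (auto simp: sum.distrib)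

lemma sum_list_pairs_mult_left: "(c::'a::semiring_0) * (\<Sum>(p,q)\<leftarrow>xs. G p q) = (\<Sum>(p,q)\<leftarrow>xs. c * G p q)"
  by (induction xs) (auto simp: distrib_left)

lemma sum_list_pairs_mult_right: "(\<Sum>(p,q)\<leftarrow>xs. G p q) * (c::'a::semiring_0) = (\<Sum>(p,q)\<leftarrow>xs. G p q * c)"
  by (induction xs) (auto simp: distrib_right)

definition lin_map :: "(complex \<Rightarrow> 'v \<Rightarrow> 'v) \<Rightarrow> (complex \<Rightarrow> 'u \<Rightarrow> 'u) \<Rightarrow> ('v::ab_group_add \<Rightarrow> 'u::ab_group_add) \<Rightarrow> bool" where
  "lin_map s1 s2 F \<longleftrightarrow> (\<forall>x y. F (x + y) = F x + F y) \<and> (\<forall>c x. F (s1 c x) = s2 c (F x))"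

lemma lin_fun_comp_lin_map: "lin_map s1 s2 F \<Longrightarrow> lin_fun s2 f \<Longrightarrow> lin_fun s1 (\<lambda>x. f (F x))"
  by (simp add: lin_map_def lin_fun_def)

lemma lin_map_id: "lin_map s s (\<lambda>x. x)"
  by (simp add: lin_map_def)

lemma lin_map_scale_fun:
  assumes "vector_space s" and "lin_fun s1 g"
  shows "lin_map s1 s (\<lambda>x. s (g x) z)"
proof -
  interpret vector_space s by fact
  show ?thesis
    using assms(2) by (simp add: lin_map_def lin_fun_def scale_left_distrib)
qed

lemma lin_map_scale_const:
  assumes "vector_space s" and "lin_map s1 s H"
  shows "lin_map s1 s (\<lambda>x. s k (H x))"
proof -
  interpret vector_space s by fact
  show ?thesis
    using assms(2) by (simp add: lin_map_def scale_right_distrib mult.commute)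
qed

section \<open>Coordinates in a complex vector space\<close>

lemma finite_coordinates:
  fixes sc :: "complex \<Rightarrow> 'v::ab_group_add \<Rightarrow> 'v"
  assumes "vector_space sc" and "finite Q"
  obtains E c where "finite E" "\<And>e. lin_fun sc (c e)" "\<And>q. q \<in> Q \<Longrightarrow> q = (\<Sum>e\<in>E. sc (c e q) e)"
proof -
  interpret vector_space sc by fact
  obtain Bs where ind: "independent Bs" and "UNIV \<subseteq> span Bs"
    using basis_exists[of UNIV] by blast
  then have span: "v \<in> span Bs" for v by auto
  define c where "c b v = representation Bs v b" for b v
  define E where "E = (\<Union>q\<in>Q. {b. c b q \<noteq> 0})"
  have "finite E"
    unfolding E_def c_def using \<open>finite Q\<close> finite_representation by blast
  moreover have "lin_fun sc (c b)" for b
    unfolding lin_fun_def c_def by (simp add: representation_add[OF ind span span] representation_scale[OF ind span])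
  moreover have "q = (\<Sum>e\<in>E. sc (c e q) e)" if "q \<in> Q" for q
  proof -
    have "(\<Sum>e\<in>E. sc (c e q) e) = (\<Sum>b | c b q \<noteq> 0. sc (c b q) b)"
      by (rule sum.mono_neutral_cong_right) (use \<open>finite E\<close> that in \<open>auto simp: E_def\<close>)
    then show ?thesis
      using sum_nonzero_representation_eq[OF ind span] by (simp add: c_def)
  qed
  ultimately show ?thesis using that by blast
qed

lemma lin_fun_separating:
  fixes sc :: "complex \<Rightarrow> 'v::ab_group_add \<Rightarrow> 'v"
  assumes vs: "vector_space sc" and eq: "\<And>f. lin_fun sc f \<Longrightarrow> f x = f y"
  shows "x = y"
proof -
  interpret vector_space sc by fact
  obtain E c where lin: "\<And>e. lin_fun sc (c e)" and coord: "x - y = (\<Sum>e\<in>E. sc (c e (x - y)) e)"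
    by (rule finite_coordinates[OF vs, of "{x - y}"]) auto
  have zero: "c e (x - y) = 0" for e
    using lin_fun_diff[OF lin] eq[OF lin] by simp
  from coord have "x - y = (\<Sum>e\<in>E. sc 0 e)"
    by (simp only: zero)
  then show ?thesis
    by simp
qed

section \<open>Representatives of tensors\<close>

lemma tensor_eqD:
  "tensor_eq s1 s2 xs ys \<Longrightarrow> lin_fun s1 f \<Longrightarrow> lin_fun s2 g \<Longrightarrow>
   (\<Sum>(x,y)\<leftarrow>xs. f x * g y) = (\<Sum>(x,y)\<leftarrow>ys. f x * g y)"
  by (simp add: tensor_eq_def)

lemma tensor_eq_sym: "tensor_eq s1 s2 xs ys \<Longrightarrow> tensor_eq s1 s2 ys xs"
  by (simp add: tensor_eq_def)

lemma tensor_eq_trans: "tensor_eq s1 s2 xs ys \<Longrightarrow> tensor_eq s1 s2 ys zs \<Longrightarrow> tensor_eq s1 s2 xs zs"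
  by (simp add: tensor_eq_def)

lemma tensor_eq_append:
  "tensor_eq s1 s2 xs ys \<Longrightarrow> tensor_eq s1 s2 xs' ys' \<Longrightarrow> tensor_eq s1 s2 (xs @ xs') (ys @ ys')"
  by (simp add: tensor_eq_def)

lemma tensor_eq_map_scale:
  assumes "tensor_eq s1 s2 xs ys"
  shows "tensor_eq s1 s2 (map (\<lambda>(p,q). (s1 c p, q)) xs) (map (\<lambda>(p,q). (s1 c p, q)) ys)"
  unfolding tensor_eq_def sum_list_pairs_map
proof (intro allI impI)
  fix f g assume "lin_fun s1 f" "lin_fun s2 g"
  then show "(\<Sum>(p,q)\<leftarrow>xs. f (s1 c p) * g q) = (\<Sum>(p,q)\<leftarrow>ys. f (s1 c p) * g q)"
    using tensor_eqD[OF assms]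
    by (simp add: lin_fun_scale mult.assoc sum_list_pairs_mult_left[symmetric])
qed

text \<open>Product functionals determine every bilinear form: expand the second legs in coordinates.\<close>

lemma tensor_eq_sum_bilinear:
  assumes vs: "vector_space (s2 :: complex \<Rightarrow> 'w::ab_group_add \<Rightarrow> 'w)"
    and xs_ys: "tensor_eq s1 s2 xs ys"
    and lin1: "\<And>q. lin_fun s1 (\<lambda>p. K p q)" and lin2: "\<And>p. lin_fun s2 (K p)"
  shows "(\<Sum>(p,q)\<leftarrow>xs. K p q) = (\<Sum>(p,q)\<leftarrow>ys. K p q)"
proof -
  obtain E c where lin: "\<And>e. lin_fun s2 (c e)"
    and coord: "\<And>q. q \<in> set (map snd (xs @ ys)) \<Longrightarrow> q = (\<Sum>e\<in>E. s2 (c e q) e)"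
    by (rule finite_coordinates[OF vs List.finite_set]) blast
  have expand: "K p q = (\<Sum>e\<in>E. K p e * c e q)" if "(p', q) \<in> set (xs @ ys)" for p p' q
  proof -
    have "K p q = K p (\<Sum>e\<in>E. s2 (c e q) e)"
      using coord that by force
    then show ?thesis
      by (simp add: lin_fun_sum[OF lin2] lin_fun_scale[OF lin2] mult.commute)
  qed
  have "(\<Sum>(p,q)\<leftarrow>xs. K p q) = (\<Sum>(p,q)\<leftarrow>xs. \<Sum>e\<in>E. K p e * c e q)"
    by (rule sum_list_pairs_cong) (use expand in auto)
  also have "\<dots> = (\<Sum>e\<in>E. \<Sum>(p,q)\<leftarrow>xs. K p e * c e q)"
    by (rule sum_list_pairs_sum_swap)
  also have "\<dots> = (\<Sum>e\<in>E. \<Sum>(p,q)\<leftarrow>ys. K p e * c e q)"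
    using tensor_eqD[OF xs_ys lin1 lin] by simp
  also have "\<dots> = (\<Sum>(p,q)\<leftarrow>ys. \<Sum>e\<in>E. K p e * c e q)"
    by (rule sum_list_pairs_sum_swap[symmetric])
  also have "\<dots> = (\<Sum>(p,q)\<leftarrow>ys. K p q)"
    by (rule sum_list_pairs_cong, rule expand[symmetric]) auto
  finally show ?thesis .
qed

lemma tensor_eq_sum_bilinear_map:
  assumes "vector_space (s2 :: complex \<Rightarrow> 'w::ab_group_add \<Rightarrow> 'w)"
    and "vector_space (s3 :: complex \<Rightarrow> 'u::ab_group_add \<Rightarrow> 'u)"
    and "tensor_eq s1 s2 xs ys"
    and lin1: "\<And>q. lin_map s1 s3 (\<lambda>p. M p q)" and lin2: "\<And>p. lin_map s2 s3 (M p)"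
  shows "(\<Sum>(p,q)\<leftarrow>xs. M p q) = (\<Sum>(p,q)\<leftarrow>ys. M p q)"
proof (rule lin_fun_separating[OF assms(2)])
  fix f assume f: "lin_fun s3 f"
  have "(\<Sum>(p,q)\<leftarrow>xs. f (M p q)) = (\<Sum>(p,q)\<leftarrow>ys. f (M p q))"
    by (rule tensor_eq_sum_bilinear[OF assms(1,3)])
      (simp_all add: lin_fun_comp_lin_map[OF lin1 f] lin_fun_comp_lin_map[OF lin2 f])
  then show "f (\<Sum>(p,q)\<leftarrow>xs. M p q) = f (\<Sum>(p,q)\<leftarrow>ys. M p q)"
    by (simp add: lin_fun_sum_list[OF f])
qed

section \<open>Compact quantum group algebras\<close>

locale cqg =
  fixes sc :: "complex \<Rightarrow> 'a::ring_1 \<Rightarrow> 'a"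
    and st :: "'a \<Rightarrow> 'a" and Delta :: "'a \<Rightarrow> ('a \<times> 'a) list"
    and eps :: "'a \<Rightarrow> complex" and S :: "'a \<Rightarrow> 'a" and Phi :: "'a \<Rightarrow> complex"
  assumes cqg_hopf_star_algebra: "cqg_hopf_star_algebra sc st Delta eps S Phi"
begin

lemma
  shows vector_space: "vector_space sc"
    and scale_mult_left: "sc c (x * y) = sc c x * y"
    and scale_mult_right: "sc c (x * y) = x * sc c y"
    and Delta_add: "tensor_eq sc sc (Delta (x + y)) (Delta x @ Delta y)"
    and Delta_scale: "tensor_eq sc sc (Delta (sc c x)) (map (\<lambda>(p,q). (sc c p, q)) (Delta x))"
    and Delta_mult: "tensor_eq sc sc (Delta (x * y)) [(p * p', q * q'). (p,q) \<leftarrow> Delta x, (p',q') \<leftarrow> Delta y]"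
    and Delta_coassoc: "lin_fun sc f \<Longrightarrow> lin_fun sc g \<Longrightarrow> lin_fun sc h \<Longrightarrow>
        (\<Sum>(p,q)\<leftarrow>Delta x. \<Sum>(p',q')\<leftarrow>Delta p. f p' * g q' * h q) =
        (\<Sum>(p,q)\<leftarrow>Delta x. \<Sum>(p',q')\<leftarrow>Delta q. f p * g p' * h q')"
    and lin_fun_eps: "lin_fun sc eps"
    and counit_left: "(\<Sum>(p,q)\<leftarrow>Delta x. sc (eps p) q) = x"
    and counit_right: "(\<Sum>(p,q)\<leftarrow>Delta x. sc (eps q) p) = x"
    and S_add: "S (x + y) = S x + S y"
    and S_scale: "S (sc c x) = sc c (S x)"
    and antipode_right: "(\<Sum>(p,q)\<leftarrow>Delta x. p * S q) = sc (eps x) 1"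
    and star_add: "st (x + y) = st x + st y"
    and star_scale: "st (sc c x) = sc (cnj c) (st x)"
    and star_mult: "st (x * y) = st y * st x"
    and star_star [simp]: "st (st x) = x"
    and Delta_star: "tensor_eq sc sc (Delta (st x)) (map (\<lambda>(p,q). (st p, st q)) (Delta x))"
    and lin_fun_Phi: "lin_fun sc Phi"
    and Phi_positive: "Im (Phi (st x * x)) = 0 \<and> 0 \<le> Re (Phi (st x * x))"
    and Phi_faithful: "Phi (st x * x) = 0 \<Longrightarrow> x = 0"
    and Phi_left_invariant: "(\<Sum>(p,q)\<leftarrow>Delta x. sc (Phi p) q) = sc (Phi x) 1"
  by (insert cqg_hopf_star_algebra[unfolded cqg_hopf_star_algebra_def]) (elim conjE, fast)+

sublocale vs: vector_space sc
  by (rule vector_space)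

lemma star_zero: "st 0 = 0"
  using star_add[of 0 0] by simp

lemma star_one: "st 1 = 1"
  using star_mult[of 1 "st 1"] by simp

lemma star_sum_list: "st (\<Sum>(p,q)\<leftarrow>xs. g p q) = (\<Sum>(p,q)\<leftarrow>xs. st (g p q))"
  by (induction xs) (auto simp: star_zero star_add)

lemma lin_fun_mult_right: "lin_fun sc f \<Longrightarrow> lin_fun sc (\<lambda>x. f (x * z))"
  unfolding lin_fun_def by (simp add: distrib_right scale_mult_left[symmetric])

lemma lin_fun_mult_left: "lin_fun sc f \<Longrightarrow> lin_fun sc (\<lambda>x. f (z * x))"
  unfolding lin_fun_def by (simp add: distrib_left scale_mult_right[symmetric])

lemma lin_fun_cnj_star: "lin_fun sc f \<Longrightarrow> lin_fun sc (\<lambda>x. cnj (f (st x)))"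
  unfolding lin_fun_def by (simp add: star_add star_scale)

lemma lin_map_mult_right: "lin_map sc sc (\<lambda>x. x * z)"
  unfolding lin_map_def by (simp add: distrib_right scale_mult_left)

lemma lin_map_mult_S: "lin_map sc sc (\<lambda>x. z * S x)"
  unfolding lin_map_def by (simp add: distrib_left S_add S_scale scale_mult_right)

lemma lin_map_star_S_star: "lin_map sc sc (\<lambda>x. st (S (st x)))"
  unfolding lin_map_def by (simp add: star_add S_add star_scale S_scale)

lemma tensor_eq_map_star:
  assumes "tensor_eq sc sc xs ys"
  shows "tensor_eq sc sc (map (\<lambda>(p,q). (st p, st q)) xs) (map (\<lambda>(p,q). (st p, st q)) ys)"
  unfolding tensor_eq_def sum_list_pairs_map
proof (intro allI impI)
  fix f g assume "lin_fun sc f" "lin_fun sc g"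
  then have "cnj (\<Sum>(p,q)\<leftarrow>xs. cnj (f (st p)) * cnj (g (st q))) = cnj (\<Sum>(p,q)\<leftarrow>ys. cnj (f (st p)) * cnj (g (st q)))"
    using tensor_eqD[OF assms lin_fun_cnj_star lin_fun_cnj_star] by simp
  then show "(\<Sum>(p,q)\<leftarrow>xs. f (st p) * g (st q)) = (\<Sum>(p,q)\<leftarrow>ys. f (st p) * g (st q))"
    by (simp add: cnj_sum_list)
qed

lemma tensor_eq_sum_scale_by_fst:
  assumes "tensor_eq sc sc xs ys" and "lin_fun sc g" and "lin_map sc sc H"
  shows "(\<Sum>(p,q)\<leftarrow>xs. sc (g p) (H q)) = (\<Sum>(p,q)\<leftarrow>ys. sc (g p) (H q))"
  by (rule tensor_eq_sum_bilinear_map[OF vector_space vector_space assms(1)])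
    (simp_all add: lin_map_scale_fun[OF vector_space assms(2)] lin_map_scale_const[OF vector_space assms(3)])

lemma tensor_eq_sum_scale_by_snd:
  assumes "tensor_eq sc sc xs ys" and "lin_fun sc g"
  shows "(\<Sum>(p,q)\<leftarrow>xs. sc (g q) p) = (\<Sum>(p,q)\<leftarrow>ys. sc (g q) p)"
  by (rule tensor_eq_sum_bilinear_map[OF vector_space vector_space assms(1)])
    (simp_all add: lin_map_scale_fun[OF vector_space assms(2)] lin_map_scale_const[OF vector_space lin_map_id])

lemma eps_unique:
  assumes lin: "lin_fun sc e" and counit: "\<And>x. (\<Sum>(p,q)\<leftarrow>Delta x. sc (e q) p) = x"
  shows "e x = eps x"
proof -
  have "eps x = (\<Sum>(p,q)\<leftarrow>Delta x. e q * eps p)"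
    using arg_cong[OF counit[of x], of eps]
    by (simp add: lin_fun_sum_list[OF lin_fun_eps] lin_fun_scale[OF lin_fun_eps])
  also have "\<dots> = e x"
    using arg_cong[OF counit_left[of x], of e]
    by (simp add: lin_fun_sum_list[OF lin] lin_fun_scale[OF lin] mult.commute)
  finally show ?thesis ..
qed

lemma eps_star: "eps (st x) = cnj (eps x)"
proof -
  have "(\<Sum>(p,q)\<leftarrow>Delta x. sc (cnj (eps (st q))) p) = x" for x
  proof -
    have "st (\<Sum>(p,q)\<leftarrow>Delta x. sc (cnj (eps (st q))) p) = (\<Sum>(p,q)\<leftarrow>map (\<lambda>(p,q). (st p, st q)) (Delta x). sc (eps q) p)"
      unfolding sum_list_pairs_map by (simp add: star_sum_list star_scale)
    also have "\<dots> = (\<Sum>(p,q)\<leftarrow>Delta (st x). sc (eps q) p)"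
      by (rule tensor_eq_sum_scale_by_snd[OF tensor_eq_sym[OF Delta_star] lin_fun_eps])
    also have "\<dots> = st x"
      by (rule counit_right)
    finally show ?thesis
      by (metis star_star)
  qed
  from eps_unique[OF lin_fun_cnj_star[OF lin_fun_eps] this] show ?thesis
    by (metis complex_cnj_cnj)
qed

text \<open>Polarization: apply positivity to \<open>x + y\<close> and to \<open>x + i y\<close>.\<close>

lemma Phi_hermitian: "Phi (st y * x) = cnj (Phi (st x * y))"
proof -
  define a where "a = Phi (st x * y)"
  define b where "b = Phi (st y * x)"
  note Phi_add = lin_fun_add[OF lin_fun_Phi] and Phi_diff = lin_fun_diff[OF lin_fun_Phi]
  have "st (x + y) * (x + y) = st x * x + st x * y + st y * x + st y * y"
    by (simp add: star_add algebra_simps)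
  then have "Phi (st (x + y) * (x + y)) = Phi (st x * x) + a + b + Phi (st y * y)"
    by (simp add: a_def b_def Phi_add)
  then have im: "Im (a + b) = 0"
    using Phi_positive[of "x + y"] Phi_positive[of x] Phi_positive[of y] by simp
  have "st (x + sc \<i> y) * (x + sc \<i> y) = st x * x + sc \<i> (st x * y) + sc (- \<i>) (st y * x) + st y * y"
    by (simp add: star_add star_scale algebra_simps scale_mult_left[symmetric] scale_mult_right[symmetric])
  then have "Phi (st (x + sc \<i> y) * (x + sc \<i> y)) = Phi (st x * x) + \<i> * a - \<i> * b + Phi (st y * y)"
    by (simp add: a_def b_def Phi_add Phi_diff lin_fun_scale[OF lin_fun_Phi])
  then have re: "Re a - Re b = 0"
    using Phi_positive[of "x + sc \<i> y"] Phi_positive[of x] Phi_positive[of y] by simp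
  from im re have "b = cnj a"
    by (simp add: complex_eq_iff)
  then show ?thesis
    by (simp add: a_def b_def)
qed

lemma antipode_star: "(\<Sum>(p,q)\<leftarrow>Delta x. st (S (st q)) * p) = sc (eps x) 1"
proof -
  have "(\<Sum>(p,q)\<leftarrow>Delta x. st p * S (st q)) = (\<Sum>(p,q)\<leftarrow>map (\<lambda>(p,q). (st p, st q)) (Delta x). p * S q)"
    by (simp only: sum_list_pairs_map)
  also have "\<dots> = (\<Sum>(p,q)\<leftarrow>Delta (st x). p * S q)"
    by (rule tensor_eq_sum_bilinear_map[OF vector_space vector_space tensor_eq_sym[OF Delta_star]
          lin_map_mult_right lin_map_mult_S])
  also have "\<dots> = sc (eps (st x)) 1"
    by (rule antipode_right)
  finally have "st (\<Sum>(p,q)\<leftarrow>Delta x. st p * S (st q)) = st (sc (eps (st x)) 1)"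
    by simp
  then show ?thesis
    by (simp add: star_sum_list star_mult star_scale star_one eps_star)
qed

lemma Delta_coassoc_bilinear:
  assumes g: "lin_fun sc g" and K1: "\<And>b. lin_fun sc (\<lambda>a. K a b)" and K2: "\<And>a. lin_fun sc (K a)"
  shows "(\<Sum>(p,q)\<leftarrow>Delta x. \<Sum>(p',q')\<leftarrow>Delta p. g p' * K q' q) =
         (\<Sum>(p,q)\<leftarrow>Delta x. \<Sum>(p',q')\<leftarrow>Delta q. g p * K p' q')"
proof -
  let ?L = "[(sc (g p') q', q). (p,q) \<leftarrow> Delta x, (p',q') \<leftarrow> Delta p]"
  let ?R = "[(sc (g p) p', q'). (p,q) \<leftarrow> Delta x, (p',q') \<leftarrow> Delta q]"
  have "tensor_eq sc sc ?L ?R"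
    unfolding tensor_eq_def sum_list_pairs_concat
    using Delta_coassoc[OF g] by (simp add: lin_fun_scale mult.assoc)
  from tensor_eq_sum_bilinear[OF vector_space this K1 K2] show ?thesis
    unfolding sum_list_pairs_concat by (simp add: lin_fun_scale[OF K1])
qed

lemma Phi_left_invariant_fun:
  assumes f: "lin_fun sc f"
  shows "Phi z * f v = (\<Sum>(p,q)\<leftarrow>Delta z. Phi p * f (v * q))"
proof -
  have "sc (Phi z) v = v * (\<Sum>(p,q)\<leftarrow>Delta z. sc (Phi p) q)"
    by (simp add: Phi_left_invariant scale_mult_right[symmetric])
  also have "\<dots> = (\<Sum>(p,q)\<leftarrow>Delta z. sc (Phi p) (v * q))"
    by (simp add: sum_list_pairs_mult_left scale_mult_right)
  finally have "f (sc (Phi z) v) = f (\<Sum>(p,q)\<leftarrow>Delta z. sc (Phi p) (v * q))"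
    by simp
  then show ?thesis
    by (simp add: lin_fun_scale[OF f] lin_fun_sum_list[OF f])
qed

lemma counit_right_fun: "lin_fun sc F \<Longrightarrow> (\<Sum>(y,c)\<leftarrow>Delta u. F y * eps c) = F u"
  using arg_cong[OF counit_right[of u], of F]
  by (simp add: lin_fun_sum_list lin_fun_scale mult.commute)

lemma Phi_mult_invariant_fun:
  assumes f: "lin_fun sc f"
  shows "Phi (y * w) * f v = (\<Sum>(p',q')\<leftarrow>Delta w. \<Sum>(p,q)\<leftarrow>Delta y. Phi (p * p') * f (v * q * q'))"
proof -
  have "Phi (y * w) * f v = (\<Sum>(p,q)\<leftarrow>Delta (y * w). Phi p * f (v * q))"
    by (rule Phi_left_invariant_fun[OF f])
  also have "\<dots> = (\<Sum>(p,q)\<leftarrow>[(p * p', q * q'). (p,q) \<leftarrow> Delta y, (p',q') \<leftarrow> Delta w]. Phi p * f (v * q))"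
    by (rule tensor_eqD[OF Delta_mult lin_fun_Phi lin_fun_mult_left[OF f]])
  also have "\<dots> = (\<Sum>(p,q)\<leftarrow>Delta y. \<Sum>(p',q')\<leftarrow>Delta w. Phi (p * p') * f (v * q * q'))"
    by (simp only: sum_list_pairs_concat mult.assoc)
  also have "\<dots> = (\<Sum>(p',q')\<leftarrow>Delta w. \<Sum>(p,q)\<leftarrow>Delta y. Phi (p * p') * f (v * q * q'))"
    by (rule sum_list_pairs_swap)
  finally show ?thesis .
qed

text \<open>Strong invariance of the Haar state, \<open>(\<Phi> \<otimes> id)((u \<otimes> 1) \<Delta>(w)) = S\<^sup>-\<^sup>1((\<Phi> \<otimes> id)(\<Delta>(u) (w \<otimes> 1)))\<close>,
  with \<open>S\<^sup>-\<^sup>1(b) = S(b\<^sup>*)\<^sup>*\<close>.\<close>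

lemma Phi_strong_invariance:
  "(\<Sum>(y,b)\<leftarrow>Delta u. sc (Phi (y * w)) (st (S (st b)))) = (\<Sum>(x,a)\<leftarrow>Delta w. sc (Phi (u * x)) a)"
proof (rule lin_fun_separating[OF vector_space])
  fix f assume f: "lin_fun sc f"
  let ?T = "\<lambda>b. st (S (st b))"
  have antipode: "(\<Sum>(q,b)\<leftarrow>Delta c. f (?T b * q * z)) = eps c * f z" for c z
    using arg_cong[OF antipode_star[of c], of "\<lambda>x. f (x * z)"]
    by (simp add: sum_list_pairs_mult_right lin_fun_sum_list[OF f]
        scale_mult_left[symmetric] lin_fun_scale[OF f])
  have counit: "(\<Sum>(y,c)\<leftarrow>Delta u. Phi (y * p) * (eps c * z)) = Phi (u * p) * z" for p z
    using arg_cong[OF counit_right_fun[OF lin_fun_mult_right[OF lin_fun_Phi], of p u], of "\<lambda>x. x * z"]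
    by (simp only: sum_list_pairs_mult_right mult.assoc)
  have "f (\<Sum>(y,b)\<leftarrow>Delta u. sc (Phi (y * w)) (?T b)) = (\<Sum>(y,b)\<leftarrow>Delta u. Phi (y * w) * f (?T b))"
    by (simp add: lin_fun_sum_list[OF f] lin_fun_scale[OF f])
  also have "\<dots> = (\<Sum>(y,b)\<leftarrow>Delta u. \<Sum>(p',q')\<leftarrow>Delta w. \<Sum>(p,q)\<leftarrow>Delta y. Phi (p * p') * f (?T b * q * q'))"
    by (simp only: Phi_mult_invariant_fun[OF f, of _ w])
  also have "\<dots> = (\<Sum>(p',q')\<leftarrow>Delta w. \<Sum>(y,b)\<leftarrow>Delta u. \<Sum>(p,q)\<leftarrow>Delta y. Phi (p * p') * f (?T b * q * q'))"
    by (rule sum_list_pairs_swap)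
  also have "\<dots> = (\<Sum>(p',q')\<leftarrow>Delta w. \<Sum>(y,c)\<leftarrow>Delta u. \<Sum>(q,b)\<leftarrow>Delta c. Phi (y * p') * f (?T b * q * q'))"
    by (rule sum_list_pairs_cong, rule Delta_coassoc_bilinear[OF lin_fun_mult_right[OF lin_fun_Phi]
          lin_fun_mult_left[OF lin_fun_mult_right[OF f]]
          lin_fun_comp_lin_map[OF lin_map_star_S_star lin_fun_mult_right[OF lin_fun_mult_right[OF f]]]])
  also have "\<dots> = (\<Sum>(p',q')\<leftarrow>Delta w. Phi (u * p') * f q')"
    by (simp only: sum_list_pairs_mult_left[symmetric] antipode counit)
  also have "\<dots> = f (\<Sum>(x,a)\<leftarrow>Delta w. sc (Phi (u * x)) a)"
    by (simp add: lin_fun_sum_list[OF f] lin_fun_scale[OF f])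
  finally show "f (\<Sum>(y,b)\<leftarrow>Delta u. sc (Phi (y * w)) (?T b)) = f (\<Sum>(x,a)\<leftarrow>Delta w. sc (Phi (u * x)) a)" .
qed

lemma lin_fun_Delta:
  assumes f: "lin_fun sc f" and g: "lin_fun sc g"
  shows "lin_fun sc (\<lambda>x. \<Sum>(p,q)\<leftarrow>Delta x. f p * g q)"
  unfolding lin_fun_def
proof (intro conjI allI)
  fix x y c
  show "(\<Sum>(p,q)\<leftarrow>Delta (x + y). f p * g q) = (\<Sum>(p,q)\<leftarrow>Delta x. f p * g q) + (\<Sum>(p,q)\<leftarrow>Delta y. f p * g q)"
    using tensor_eqD[OF Delta_add f g, of x y] by simp
  have "(\<Sum>(p,q)\<leftarrow>Delta (sc c x). f p * g q) = (\<Sum>(p,q)\<leftarrow>Delta x. f (sc c p) * g q)"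
    using tensor_eqD[OF Delta_scale f g] by (simp only: sum_list_pairs_map)
  then show "(\<Sum>(p,q)\<leftarrow>Delta (sc c x). f p * g q) = c * (\<Sum>(p,q)\<leftarrow>Delta x. f p * g q)"
    by (simp add: sum_list_pairs_mult_left lin_fun_scale[OF f] mult.assoc)
qed

lemma representatives_add:
  assumes "tensor_eq sc sc xs (Delta v)" and "tensor_eq sc sc ys (Delta w)"
    and "tensor_eq sc sc zs (Delta (v + w))"
  shows "tensor_eq sc sc zs (xs @ ys)"
  using tensor_eq_trans[OF assms(3) tensor_eq_trans[OF Delta_add
        tensor_eq_append[OF tensor_eq_sym[OF assms(1)] tensor_eq_sym[OF assms(2)]]]] .

lemma representatives_scale:
  assumes "tensor_eq sc sc xs (Delta v)" and "tensor_eq sc sc zs (Delta (sc c v))"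
  shows "tensor_eq sc sc zs (map (\<lambda>(p,q). (sc c p, q)) xs)"
  using tensor_eq_trans[OF assms(2) tensor_eq_trans[OF Delta_scale
        tensor_eq_map_scale[OF tensor_eq_sym[OF assms(1)]]]] .

lemma representatives_mult:
  assumes xs: "tensor_eq sc sc xs (Delta b)" and ys: "tensor_eq sc sc ys (Delta v)"
    and zs: "tensor_eq sc sc zs (Delta (b * v))"
  shows "tensor_eq sc sc zs [(p * w, q * a). (p,q) \<leftarrow> xs, (w,a) \<leftarrow> ys]"
  unfolding tensor_eq_def
proof (intro allI impI)
  fix f g assume f: "lin_fun sc f" and g: "lin_fun sc g"
  have "(\<Sum>(x,y)\<leftarrow>zs. f x * g y) = (\<Sum>(p,q)\<leftarrow>Delta b. \<Sum>(p',q')\<leftarrow>Delta v. f (p * p') * g (q * q'))"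
    using tensor_eqD[OF zs f g] tensor_eqD[OF Delta_mult f g] by (simp add: sum_list_pairs_concat)
  also have "\<dots> = (\<Sum>(p',q')\<leftarrow>Delta v. \<Sum>(p,q)\<leftarrow>xs. f (p * p') * g (q * q'))"
    by (simp only: sum_list_pairs_swap[of _ _ "Delta b"]
        tensor_eqD[OF tensor_eq_sym[OF xs] lin_fun_mult_right[OF f] lin_fun_mult_right[OF g]])
  also have "\<dots> = (\<Sum>(p,q)\<leftarrow>xs. \<Sum>(p',q')\<leftarrow>ys. f (p * p') * g (q * q'))"
    by (simp only: sum_list_pairs_swap[of _ _ "Delta v"]
        tensor_eqD[OF tensor_eq_sym[OF ys] lin_fun_mult_left[OF f] lin_fun_mult_left[OF g]])
  finally show "(\<Sum>(x,y)\<leftarrow>zs. f x * g y) = (\<Sum>(x,y)\<leftarrow>[(p * w, q * a). (p,q) \<leftarrow> xs, (w,a) \<leftarrow> ys]. f x * g y)"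
    by (simp only: sum_list_pairs_concat)
qed

lemma representatives_coassoc:
  assumes xs: "tensor_eq sc sc xs (Delta v)"
    and legs: "\<And>w a. (w,a) \<in> set xs \<Longrightarrow> tensor_eq sc sc (ws w) (Delta w)"
    and f: "lin_fun sc f" and g: "lin_fun sc g" and h: "lin_fun sc h"
  shows "(\<Sum>(w,a)\<leftarrow>xs. \<Sum>(w',a')\<leftarrow>ws w. f w' * g a' * h a) =
         (\<Sum>(w,a)\<leftarrow>xs. \<Sum>(p,q)\<leftarrow>Delta a. f w * g p * h q)"
proof -
  have "(\<Sum>(w,a)\<leftarrow>xs. \<Sum>(w',a')\<leftarrow>ws w. f w' * g a' * h a) =
        (\<Sum>(w,a)\<leftarrow>xs. (\<Sum>(w',a')\<leftarrow>Delta w. f w' * g a') * h a)"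
    by (rule sum_list_pairs_cong) (simp add: sum_list_pairs_mult_right[symmetric] tensor_eqD[OF legs f g])
  also have "\<dots> = (\<Sum>(w,a)\<leftarrow>Delta v. (\<Sum>(w',a')\<leftarrow>Delta w. f w' * g a') * h a)"
    by (rule tensor_eqD[OF xs lin_fun_Delta[OF f g] h])
  also have "\<dots> = (\<Sum>(w,a)\<leftarrow>Delta v. f w * (\<Sum>(p,q)\<leftarrow>Delta a. g p * h q))"
    using Delta_coassoc[OF f g h, of v]
    by (simp add: sum_list_pairs_mult_left sum_list_pairs_mult_right mult.assoc)
  also have "\<dots> = (\<Sum>(w,a)\<leftarrow>xs. f w * (\<Sum>(p,q)\<leftarrow>Delta a. g p * h q))"
    by (rule tensor_eqD[OF tensor_eq_sym[OF xs] f lin_fun_Delta[OF g h]])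
  finally show ?thesis
    by (simp add: sum_list_pairs_mult_left mult.assoc)
qed

lemma representatives_counit:
  "tensor_eq sc sc xs (Delta v) \<Longrightarrow> (\<Sum>(w,a)\<leftarrow>xs. sc (eps a) w) = v"
  using tensor_eq_sum_scale_by_snd[OF _ lin_fun_eps] counit_right by metis

lemma representatives_Phi_adjoint:
  assumes xs: "tensor_eq sc sc xs (Delta w)" and ys: "tensor_eq sc sc ys (Delta v)"
  shows "(\<Sum>(x,a)\<leftarrow>xs. sc (Phi (st v * x)) a) = (\<Sum>(x,a)\<leftarrow>ys. sc (Phi (st x * w)) (st (S a)))"
proof -
  note scale_Phi_mult_right = tensor_eq_sum_scale_by_fst[OF _ lin_fun_mult_right[OF lin_fun_Phi] lin_map_star_S_star]
  have "(\<Sum>(x,a)\<leftarrow>xs. sc (Phi (st v * x)) a) = (\<Sum>(x,a)\<leftarrow>Delta w. sc (Phi (st v * x)) a)"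
    by (rule tensor_eq_sum_scale_by_fst[OF xs lin_fun_mult_left[OF lin_fun_Phi] lin_map_id])
  also have "\<dots> = (\<Sum>(y,b)\<leftarrow>Delta (st v). sc (Phi (y * w)) (st (S (st b))))"
    by (rule Phi_strong_invariance[symmetric])
  also have "\<dots> = (\<Sum>(y,b)\<leftarrow>map (\<lambda>(p,q). (st p, st q)) ys. sc (Phi (y * w)) (st (S (st b))))"
    using scale_Phi_mult_right[OF Delta_star] scale_Phi_mult_right[OF tensor_eq_map_star[OF tensor_eq_sym[OF ys]]]
    by simp
  also have "\<dots> = (\<Sum>(x,a)\<leftarrow>ys. sc (Phi (st x * w)) (st (S a)))"
    by (simp only: sum_list_pairs_map star_star)
  finally show ?thesis .
qed

section \<open>The representation on \<open>L\<^sup>2\<^sub>0(B)\<close>\<close>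

lemma
  assumes "right_coideal_star_subalgebra sc st Delta B"
  shows right_coideal_one: "1 \<in> B"
    and right_coideal_add: "x \<in> B \<Longrightarrow> y \<in> B \<Longrightarrow> x + y \<in> B"
    and right_coideal_mult: "x \<in> B \<Longrightarrow> y \<in> B \<Longrightarrow> x * y \<in> B"
    and right_coideal_scale: "x \<in> B \<Longrightarrow> sc c x \<in> B"
  using assms unfolding right_coideal_star_subalgebra_def by blast+

lemma L2_in_BRepA:
  assumes B: "right_coideal_star_subalgebra sc st Delta B"
    and fst_alpha: "\<And>b. b \<in> B \<Longrightarrow> set (map fst (alpha b)) \<subseteq> B"
    and rep: "\<And>b. b \<in> B \<Longrightarrow> tensor_eq sc sc (alpha b) (Delta b)"
  shows "in_BRepA sc st Delta eps S B B sc (\<lambda>b v. b * v) alpha (\<lambda>b b'. Phi (st b * b'))"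
proof -
  note one = right_coideal_one[OF B] and add = right_coideal_add[OF B]
    and mult = right_coideal_mult[OF B] and scale = right_coideal_scale[OF B]
  have zero: "0 \<in> B"
    using scale[OF one, of 0] by simp
  have legs: "w \<in> B" if "(w, a) \<in> set (alpha v)" and "v \<in> B" for w a v
    using fst_alpha[OF that(2)] that(1) by force
  show ?thesis
    unfolding in_BRepA_def
  proof (intro conjI ballI allI impI)
    fix v w assume v: "v \<in> B" and w: "w \<in> B"
    show "tensor_eq sc sc (alpha (v + w)) (alpha v @ alpha w)"
      by (rule representatives_add[OF rep[OF v] rep[OF w] rep[OF add[OF v w]]])
    show "(\<Sum>(x,a)\<leftarrow>alpha w. sc (Phi (st v * x)) a) = (\<Sum>(x,a)\<leftarrow>alpha v. sc (Phi (st x * w)) (st (S a)))"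
      by (rule representatives_Phi_adjoint[OF rep[OF w] rep[OF v]])
  next
    fix c v assume v: "v \<in> B"
    show "tensor_eq sc sc (alpha (sc c v)) (map (\<lambda>(x,a). (sc c x, a)) (alpha v))"
      by (rule representatives_scale[OF rep[OF v] rep[OF scale[OF v]]])
  next
    fix v f g h assume v: "v \<in> B" and lin: "lin_fun sc f" "lin_fun sc g" "lin_fun sc h"
    show "(\<Sum>(w,a)\<leftarrow>alpha v. \<Sum>(w',a')\<leftarrow>alpha w. f w' * g a' * h a) =
          (\<Sum>(w,a)\<leftarrow>alpha v. \<Sum>(p,q)\<leftarrow>Delta a. f w * g p * h q)"
      by (rule representatives_coassoc[OF rep[OF v] rep[OF legs[OF _ v]] lin])
  next
    fix b v xs assume b: "b \<in> B" and v: "v \<in> B" and xs: "tensor_eq sc sc xs (Delta b)"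
    show "tensor_eq sc sc (alpha (b * v)) [(p * w, q * a). (p,q) \<leftarrow> xs, (w,a) \<leftarrow> alpha v]"
      by (rule representatives_mult[OF xs rep[OF v] rep[OF mult[OF b v]]])
  next
    fix v assume "v \<in> B"
    then show "set (map fst (alpha v)) \<subseteq> B"
      by (rule fst_alpha)
  next
    fix v assume "Phi (st v * v) = 0"
    then show "v = 0"
      by (rule Phi_faithful)
  qed (simp_all add: vector_space zero one add mult scale rep representatives_counit Phi_positive
      Phi_hermitian[symmetric] distrib_left distrib_right mult.assoc star_mult
      scale_mult_left[symmetric] scale_mult_right[symmetric]
      lin_fun_add[OF lin_fun_Phi] lin_fun_scale[OF lin_fun_Phi])
qed

end

theorem mainTheorem9:
  fixes sc :: "complex \<Rightarrow> 'a::ring_1 \<Rightarrow> 'a"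
    and st :: "'a \<Rightarrow> 'a" and Delta :: "'a \<Rightarrow> ('a \<times> 'a) list"
    and eps :: "'a \<Rightarrow> complex" and S :: "'a \<Rightarrow> 'a" and Phi :: "'a \<Rightarrow> complex"
    and B :: "'a set"
  assumes "cqg_hopf_star_algebra sc st Delta eps S Phi"
    and "right_coideal_star_subalgebra sc st Delta B"
  shows "\<exists>alpha. (\<forall>b\<in>B. set (map fst (alpha b)) \<subseteq> B \<and> tensor_eq sc sc (alpha b) (Delta b)) \<and>
           in_BRepA sc st Delta eps S B B sc (\<lambda>b v. b * v) alpha (\<lambda>b b'. Phi (st b * b'))"
proof -
  interpret cqg sc st Delta eps S Phi
    by (rule cqg.intro) fact
  have "\<forall>b\<in>B. \<exists>xs. set (map fst xs) \<subseteq> B \<and> tensor_eq sc sc xs (Delta b)"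
    using assms(2) tensor_eq_sym unfolding right_coideal_star_subalgebra_def by blast
  from bchoice[OF this] obtain alpha
    where alpha: "\<forall>b\<in>B. set (map fst (alpha b)) \<subseteq> B \<and> tensor_eq sc sc (alpha b) (Delta b)"
    by blast
  with L2_in_BRepA[OF assms(2), of alpha] show ?thesis
    by blast
qed

end
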